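(* For every integer $k\geq 1$, the following identity of formal power series in $q$ holds: \[ (q;q)_{\infty}\sum_{i=0}^{\infty}\frac{q^{i}}{(q;q)_i^{k+1}}=\sum_{i_1=0}^{\infty}\cdots\sum_{i_k=0}^{\infty}\frac{q^{\sum_{j=1}^k (i_j+i_j^2)+\sum_{s=2}^k \sum_{j=s}^k i_{s-1}i_j}}{\prod_{j=1}^k (q;q)_{i_j}\,(q;q)_{\sum_{s=1}^j i_s}}. \]
   Context: Notation: $(a;q)_n=\prod_{j=0}^{n-1}(1-aq^j)$ (so $(q;q)_0=1$) and $(q;q)_\infty=\prod_{j\ge 1}(1-q^j)$. *)

theory Defs
  imports "HOL-Analysis.Analysis" "HOL-Computational_Algebra.Formal_Power_Series"
begin

definition qpoch :: "nat \<Rightarrow> rat fps" where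
  "qpoch n = (\<Prod>j=1..n. 1 - fps_X ^ j)"

definition qpoch_inf :: "rat fps" where
  "qpoch_inf = lim qpoch"

text \<open>Exponent of the summand indexed by (i_1,...,i_k) = xs (0-indexed list of length k).\<close>
definition rhs_exp :: "nat list \<Rightarrow> nat" where
  "rhs_exp xs = (\<Sum>j<length xs. xs!j + (xs!j)^2)
      + (\<Sum>s\<in>{1..<length xs}. \<Sum>j\<in>{s..<length xs}. xs!(s-1) * xs!j)"

definition rhs_den :: "nat list \<Rightarrow> rat fps" where
  "rhs_den xs = (\<Prod>j<length xs. qpoch (xs!j) * qpoch (\<Sum>s\<le>j. xs!s))"

definition rhs_term :: "nat list \<Rightarrow> rat fps" where
  "rhs_term xs = fps_X ^ rhs_exp xs / rhs_den xs"

end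

theory Submission
  imports Defs
begin

text \<open>
  Let T_M(i_1,...,i_k) be the right-hand summand with every partial sum i_1 + ... + i_j
  shifted by M, and cut all indices off at B. The finite sum of the T_M agrees in all
  degrees <= B with (q;q)_B * sum_{m <= B} q^m / ((q;q)_m (q;q)_{m+M}^k). For k = 0 this is the
  finite Euler identity sum_{m <= B} q^m / (q;q)_m = 1 / (q;q)_B. For the induction step, split
  off the first index i and apply the hypothesis with offset M + i; the pairs (i, m) with
  i + m > B only contribute in degrees > B, and summing over i + m = p is the finite Durfee
  rectangle identity sum_i q^{i(i+M)} / ((q;q)_i (q;q)_{p-i} (q;q)_{M+i}) = 1 / ((q;q)_p (q;q)_{p+M}).
  Letting B tend to infinity in the q-adic topology gives the theorem.
\<close>

definition fps_eq_upto :: "nat \<Rightarrow> 'a fps \<Rightarrow> 'a fps \<Rightarrow> bool" where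
  "fps_eq_upto n f g \<longleftrightarrow> (\<forall>m\<le>n. fps_nth f m = fps_nth g m)"

lemma fps_eq_upto_refl [simp]: "fps_eq_upto n f f"
  by (simp add: fps_eq_upto_def)

lemma fps_eq_upto_sym: "fps_eq_upto n f g \<Longrightarrow> fps_eq_upto n g f"
  by (simp add: fps_eq_upto_def)

lemma fps_eq_upto_trans: "fps_eq_upto n f g \<Longrightarrow> fps_eq_upto n g h \<Longrightarrow> fps_eq_upto n f h"
  by (simp add: fps_eq_upto_def)

lemma fps_eq_upto_mono: "fps_eq_upto n f g \<Longrightarrow> m \<le> n \<Longrightarrow> fps_eq_upto m f g"
  by (simp add: fps_eq_upto_def)

lemma fps_ext_eq_upto: "(\<And>n. fps_eq_upto n f g) \<Longrightarrow> f = g"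
  by (auto simp: fps_eq_upto_def fps_eq_iff)

lemma fps_eq_upto_add:
  "fps_eq_upto n f g \<Longrightarrow> fps_eq_upto n f' g' \<Longrightarrow> fps_eq_upto n (f + f') (g + g')"
  by (simp add: fps_eq_upto_def)

lemma fps_eq_upto_diff:
  "fps_eq_upto n f g \<Longrightarrow> fps_eq_upto n f' g' \<Longrightarrow> fps_eq_upto n (f - f') (g - g')"
  by (simp add: fps_eq_upto_def)

lemma fps_eq_upto_mult:
  fixes f g :: "'a::semiring_0 fps"
  assumes "fps_eq_upto n f g" "fps_eq_upto n f' g'"
  shows "fps_eq_upto n (f * f') (g * g')"
  unfolding fps_eq_upto_def fps_mult_nth
  using assms by (auto simp: fps_eq_upto_def intro!: sum.cong)

lemma fps_eq_upto_sum:
  "(\<And>x. x \<in> A \<Longrightarrow> fps_eq_upto n (f x) (g x)) \<Longrightarrow> fps_eq_upto n (sum f A) (sum g A)"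
  by (induction A rule: infinite_finite_induct) (auto intro: fps_eq_upto_add)

lemma fps_eq_upto_sum_subset:
  assumes "finite A" "A' \<subseteq> A" "\<And>x. x \<in> A - A' \<Longrightarrow> fps_eq_upto n (f x) 0"
  shows "fps_eq_upto n (sum f A) (sum f A')"
proof -
  have "fps_eq_upto n (sum f A' + sum f (A - A')) (sum f A' + sum (\<lambda>_. 0) (A - A'))"
    by (intro fps_eq_upto_add fps_eq_upto_refl fps_eq_upto_sum) (use assms in auto)
  moreover have "sum f A = sum f A' + sum f (A - A')"
    using assms by (metis add.commute sum.subset_diff)
  ultimately show ?thesis by simp
qed

lemma fps_eq_upto_X_power_mult:
  "n < e \<Longrightarrow> fps_eq_upto n (fps_X ^ e * h :: 'a::semiring_1 fps) 0"
  by (simp add: fps_eq_upto_def fps_X_power_mult_nth)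

lemma stabilizing_sequence_converges:
  fixes g :: "nat \<Rightarrow> 'a::group_add fps"
  assumes stable: "\<And>n B. n \<le> B \<Longrightarrow> fps_eq_upto n (g B) (g n)"
  obtains L where "g \<longlonglongrightarrow> L" "\<And>n. fps_eq_upto n L (g n)"
proof
  define L where "L = Abs_fps (\<lambda>n. fps_nth (g n) n)"
  show "g \<longlonglongrightarrow> L"
  proof (rule tendsto_fpsI)
    fix m
    show "\<forall>\<^sub>F B in sequentially. fps_nth (g B) m = fps_nth L m"
      unfolding eventually_sequentially L_def
      using stable by (auto simp: fps_eq_upto_def)
  qed
  show "fps_eq_upto n L (g n)" for n
    using stable by (auto simp: fps_eq_upto_def L_def)
qed

lemma has_sum_of_eq_upto:
  fixes f :: "'b \<Rightarrow> 'a::ab_group_add fps"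
  assumes fin: "\<And>n. finite (C n)" and sub: "\<And>n. C n \<subseteq> A"
    and negligible: "\<And>n x. x \<in> A - C n \<Longrightarrow> fps_eq_upto n (f x) 0"
  obtains L where "(f has_sum L) A" "\<And>n. fps_eq_upto n L (sum f (C n))"
proof
  have stable: "fps_eq_upto n (sum f Y) (sum f (C n))" if "finite Y" "C n \<subseteq> Y" "Y \<subseteq> A" for Y n
    by (rule fps_eq_upto_sum_subset) (use that negligible in auto)
  define L where "L = Abs_fps (\<lambda>n. fps_nth (sum f (C n)) n)"
  show "(f has_sum L) A"
    unfolding has_sum_def
  proof (rule tendsto_fpsI)
    fix m
    show "\<forall>\<^sub>F Y in finite_subsets_at_top A. fps_nth (sum f Y) m = fps_nth L m"
      unfolding eventually_finite_subsets_at_top L_def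
      by (rule exI[of _ "C m"]) (use fin sub stable in \<open>auto simp: fps_eq_upto_def\<close>)
  qed
  show "fps_eq_upto n L (sum f (C n))" for n
    unfolding fps_eq_upto_def
  proof (intro allI impI)
    fix m assume "m \<le> n"
    then have "fps_eq_upto m (sum f (C m \<union> C n)) (sum f (C m))"
      and "fps_eq_upto m (sum f (C m \<union> C n)) (sum f (C n))"
      using fin sub by (auto intro!: stable fps_eq_upto_mono[OF stable])
    then show "fps_nth L m = fps_nth (sum f (C n)) m"
      by (simp add: fps_eq_upto_def L_def)
  qed
qed

lemma qpoch_0 [simp]: "qpoch 0 = 1"
  by (simp add: qpoch_def)

lemma qpoch_Suc: "qpoch (Suc n) = qpoch n * (1 - fps_X ^ Suc n)"
  by (simp add: qpoch_def prod.cl_ivl_Suc)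

lemma qpoch_nth_0 [simp]: "fps_nth (qpoch n) 0 = 1"
  by (induction n) (simp_all add: qpoch_Suc)

lemma qpoch_eq_upto: "n \<le> B \<Longrightarrow> fps_eq_upto n (qpoch B) (qpoch n)"
proof (induction B rule: dec_induct)
  case (step B)
  have "fps_eq_upto n (qpoch B - fps_X ^ Suc B * qpoch B) (qpoch n - 0)"
    using step by (intro fps_eq_upto_diff fps_eq_upto_X_power_mult) auto
  then show ?case by (simp add: qpoch_Suc algebra_simps)
qed simp

lemma
  shows convergent_qpoch: "convergent qpoch"
    and qpoch_inf_eq_upto: "fps_eq_upto n qpoch_inf (qpoch n)"
proof -
  obtain L where "qpoch \<longlonglongrightarrow> L" and L: "\<And>n. fps_eq_upto n L (qpoch n)"
    using stabilizing_sequence_converges qpoch_eq_upto by blast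
  then have "convergent qpoch" and "qpoch_inf = L"
    by (auto simp: convergentI qpoch_inf_def limI)
  with L show "convergent qpoch" "fps_eq_upto n qpoch_inf (qpoch n)" by simp_all
qed

definition qpoch_inv :: "nat \<Rightarrow> rat fps" where
  "qpoch_inv n = inverse (qpoch n)"

lemma qpoch_inv_0 [simp]: "qpoch_inv 0 = 1"
  by (simp add: qpoch_inv_def)

lemma qpoch_mult_qpoch_inv [simp]: "qpoch n * qpoch_inv n = 1"
  unfolding qpoch_inv_def by (rule inverse_mult_eq_1') simp

lemma qpoch_inv_Suc: "qpoch_inv n = qpoch_inv (Suc n) * (1 - fps_X ^ Suc n)"
proof -
  have "inverse (1 - fps_X ^ Suc n) * (1 - fps_X ^ Suc n :: rat fps) = 1"
    by (rule inverse_mult_eq_1) simp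
  then show ?thesis
    unfolding qpoch_inv_def qpoch_Suc by (simp add: fps_inverse_mult mult.assoc)
qed

lemma sum_X_power_qpoch_inv: "(\<Sum>m\<le>B. fps_X ^ m * qpoch_inv m) = qpoch_inv B"
proof (induction B)
  case (Suc B)
  have "(\<Sum>m\<le>Suc B. fps_X ^ m * qpoch_inv m) = qpoch_inv B + fps_X ^ Suc B * qpoch_inv (Suc B)"
    using Suc by simp
  also have "\<dots> = qpoch_inv (Suc B)"
    by (subst qpoch_inv_Suc) (simp add: algebra_simps)
  finally show ?case .
qed simp

text \<open>The q-Pascal recurrence, divided by (q;q)_i (q;q)_{n+1-i}.\<close>
lemma qpoch_inv_pascal:
  assumes "i \<le> Suc n"
  shows "qpoch_inv i * qpoch_inv (Suc n - i) * (1 - fps_X ^ Suc n) =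
    (if i = 0 then 0 else qpoch_inv (i - 1) * qpoch_inv (Suc n - i)) +
    (if i = Suc n then 0 else fps_X ^ i * qpoch_inv i * qpoch_inv (n - i))"
proof -
  consider "i = 0" | "i = Suc n" | j where "i = Suc j" "i \<le> n"
    using assms by (metis le_SucE not0_implies_Suc)
  then show ?thesis
  proof cases
    case 3
    have diff: "Suc n - i = Suc (n - i)"
      using 3 by auto
    have X_power: "fps_X ^ Suc n = fps_X ^ i * (fps_X ^ Suc (n - i) :: rat fps)"
      using 3 by (simp add: power_add[symmetric] del: power_Suc)
    have "qpoch_inv i * qpoch_inv (Suc n - i) * (1 - fps_X ^ Suc n) =
        qpoch_inv i * (1 - fps_X ^ i) * qpoch_inv (Suc n - i) +
        fps_X ^ i * qpoch_inv i * (qpoch_inv (Suc (n - i)) * (1 - fps_X ^ Suc (n - i)))"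
      unfolding X_power diff by (simp add: algebra_simps del: power_Suc)
    also have "\<dots> = qpoch_inv (i - 1) * qpoch_inv (Suc n - i) +
        fps_X ^ i * qpoch_inv i * qpoch_inv (n - i)"
      using 3 by (simp only: qpoch_inv_Suc[symmetric]) simp
    finally show ?thesis using 3 by simp
  qed (simp_all add: qpoch_inv_Suc[of n])
qed

definition durfee_sum :: "nat \<Rightarrow> nat \<Rightarrow> rat fps" where
  "durfee_sum n M =
    (\<Sum>i\<le>n. fps_X ^ (i\<^sup>2 + i * M) * qpoch_inv i * qpoch_inv (n - i) * qpoch_inv (M + i))"

lemma durfee_sum_Suc: "(1 - fps_X ^ Suc n) * durfee_sum (Suc n) M = durfee_sum n (Suc M)"
proof -
  define A where "A i = fps_X ^ (i\<^sup>2 + i * M) * qpoch_inv (M + i) *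
    (if i = 0 then 0 else qpoch_inv (i - 1) * qpoch_inv (Suc n - i))" for i
  define B where "B i = fps_X ^ (i\<^sup>2 + i * M) * qpoch_inv (M + i) *
    (if i = Suc n then 0 else fps_X ^ i * qpoch_inv i * qpoch_inv (n - i))" for i
  have "(1 - fps_X ^ Suc n) * durfee_sum (Suc n) M = (\<Sum>i\<le>Suc n. fps_X ^ (i\<^sup>2 + i * M) *
      qpoch_inv (M + i) * (qpoch_inv i * qpoch_inv (Suc n - i) * (1 - fps_X ^ Suc n)))"
    unfolding durfee_sum_def sum_distrib_left by (simp add: algebra_simps)
  also have "\<dots> = (\<Sum>i\<le>Suc n. A i + B i)"
    unfolding A_def B_def by (intro sum.cong refl) (simp only: atMost_iff qpoch_inv_pascal distrib_left)
  also have "\<dots> = (\<Sum>i\<le>n. A (Suc i) + B i)"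
    by (simp only: sum.distrib sum.atMost_Suc_shift[of A] sum.atMost_Suc[of B])
      (simp add: A_def B_def)
  also have "\<dots> = durfee_sum n (Suc M)"
    unfolding durfee_sum_def
  proof (intro sum.cong refl)
    fix i
    have X_power: "fps_X ^ ((Suc i)\<^sup>2 + Suc i * M) =
        fps_X ^ (i\<^sup>2 + i * Suc M) * (fps_X ^ Suc (M + i) :: rat fps)"
      by (simp add: power_add[symmetric] power2_eq_square algebra_simps del: power_Suc)
    assume "i \<in> {..n}"
    then have "A (Suc i) + B i = fps_X ^ (i\<^sup>2 + i * Suc M) * qpoch_inv i * qpoch_inv (n - i) *
        (fps_X ^ Suc (M + i) * qpoch_inv (Suc (M + i)) + qpoch_inv (M + i))"
      unfolding A_def B_def X_power by (simp add: power_add algebra_simps del: power_Suc)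
    also have "\<dots> =
        fps_X ^ (i\<^sup>2 + i * Suc M) * qpoch_inv i * qpoch_inv (n - i) * qpoch_inv (Suc M + i)"
      by (subst qpoch_inv_Suc[of "M + i"]) (simp add: algebra_simps del: power_Suc)
    finally show "A (Suc i) + B i = \<dots>" .
  qed
  finally show ?thesis .
qed

lemma durfee_sum_eq: "durfee_sum n M = qpoch_inv n * qpoch_inv (n + M)"
proof (induction n arbitrary: M)
  case 0
  then show ?case by (simp add: durfee_sum_def)
next
  case (Suc n)
  have "(1 - fps_X ^ Suc n) * durfee_sum (Suc n) M = qpoch_inv n * qpoch_inv (n + Suc M)"
    by (simp only: durfee_sum_Suc Suc.IH)
  also have "\<dots> = (1 - fps_X ^ Suc n) * (qpoch_inv (Suc n) * qpoch_inv (Suc n + M))"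
    by (subst qpoch_inv_Suc[of n]) (simp add: algebra_simps del: power_Suc)
  finally have "(1 - fps_X ^ Suc n) * durfee_sum (Suc n) M =
      (1 - fps_X ^ Suc n) * (qpoch_inv (Suc n) * qpoch_inv (Suc n + M))" .
  moreover have "(1 - fps_X ^ Suc n :: rat fps) \<noteq> 0"
    by (auto dest: arg_cong[of _ _ "\<lambda>f. fps_nth f 0"])
  ultimately show ?case
    using mult_left_cancel by blast
qed

text \<open>The right-hand summand for the indices xs when they are preceded by indices of total M,
  which only shift the partial sums.\<close>
fun rhs_exp_from :: "nat \<Rightarrow> nat list \<Rightarrow> nat" where
  "rhs_exp_from M [] = 0"
| "rhs_exp_from M (x # xs) = x * (M + x + 1) + rhs_exp_from (M + x) xs"

fun rhs_inv_den_from :: "nat \<Rightarrow> nat list \<Rightarrow> rat fps" where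
  "rhs_inv_den_from M [] = 1"
| "rhs_inv_den_from M (x # xs) = qpoch_inv x * qpoch_inv (M + x) * rhs_inv_den_from (M + x) xs"

definition rhs_term_from :: "nat \<Rightarrow> nat list \<Rightarrow> rat fps" where
  "rhs_term_from M xs = fps_X ^ rhs_exp_from M xs * rhs_inv_den_from M xs"

lemma rhs_term_from_Cons:
  "rhs_term_from M (x # xs) =
    fps_X ^ (x * (M + x + 1)) * qpoch_inv x * qpoch_inv (M + x) * rhs_term_from (M + x) xs"
  by (simp add: rhs_term_from_def power_add algebra_simps)

lemma member_le_rhs_exp_from: "x \<in> set xs \<Longrightarrow> x \<le> rhs_exp_from M xs"
proof (induction xs arbitrary: M)
  case (Cons y ys)
  then show ?case by (auto simp: algebra_simps intro: trans_le_add2)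
qed simp

definition bounded_lists :: "nat \<Rightarrow> nat \<Rightarrow> nat list set" where
  "bounded_lists k B = {xs. set xs \<subseteq> {..B} \<and> length xs = k}"

lemma finite_bounded_lists [simp]: "finite (bounded_lists k B)"
  unfolding bounded_lists_def by (rule finite_lists_length_eq) simp

lemma bounded_lists_0 [simp]: "bounded_lists 0 B = {[]}"
  by (auto simp: bounded_lists_def)

lemma bounded_lists_Suc: "bounded_lists (Suc k) B = (\<lambda>(i, ys). i # ys) ` ({..B} \<times> bounded_lists k B)"
proof (rule set_eqI)
  fix xs
  show "xs \<in> bounded_lists (Suc k) B \<longleftrightarrow> xs \<in> (\<lambda>(i, ys). i # ys) ` ({..B} \<times> bounded_lists k B)"
    by (cases xs) (auto simp: bounded_lists_def)
qed

lemma sum_bounded_lists_Suc: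
  "sum (rhs_term_from M) (bounded_lists (Suc k) B) =
    (\<Sum>i\<le>B. fps_X ^ (i * (M + i + 1)) * qpoch_inv i * qpoch_inv (M + i) *
      sum (rhs_term_from (M + i)) (bounded_lists k B))"
proof -
  have "inj_on (\<lambda>(i, ys). i # ys) ({..B} \<times> bounded_lists k B)"
    by (auto simp: inj_on_def)
  then have "sum (rhs_term_from M) (bounded_lists (Suc k) B) =
      (\<Sum>(i, ys)\<in>{..B} \<times> bounded_lists k B. rhs_term_from M (i # ys))"
    unfolding bounded_lists_Suc by (simp add: sum.reindex case_prod_unfold)
  then show ?thesis
    by (simp add: sum.cartesian_product[symmetric] rhs_term_from_Cons sum_distrib_left)
qed

definition lhs_partial :: "nat \<Rightarrow> nat \<Rightarrow> nat \<Rightarrow> rat fps" where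
  "lhs_partial k M B = (\<Sum>m\<le>B. fps_X ^ m * qpoch_inv m * qpoch_inv (m + M) ^ k)"

lemma lhs_partial_Suc:
  "(\<Sum>(i, m)\<in>{(i, m). i + m \<le> B}. fps_X ^ (i * (M + i + 1)) * qpoch_inv i * qpoch_inv (M + i) *
      (fps_X ^ m * qpoch_inv m * qpoch_inv (m + (M + i)) ^ k)) = lhs_partial (Suc k) M B"
  (is "(\<Sum>(i, m)\<in>_. ?F i m) = _")
proof -
  have "(\<Sum>(i, m)\<in>{(i, m). i + m \<le> B}. ?F i m) = (\<Sum>p\<le>B. \<Sum>i\<le>p. ?F i (p - i))"
    by (rule sum.triangle_reindex_eq)
  also have "\<dots> = (\<Sum>p\<le>B. fps_X ^ p * qpoch_inv (p + M) ^ k * durfee_sum p M)"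
    unfolding durfee_sum_def sum_distrib_left
  proof (intro sum.cong refl)
    fix p i
    assume "p \<in> {..B}" "i \<in> {..p}"
    then have "i * (M + i + 1) + (p - i) = p + (i\<^sup>2 + i * M)" and "p - i + (M + i) = p + M"
      by (simp_all add: power2_eq_square algebra_simps)
    then show "?F i (p - i) = fps_X ^ p * qpoch_inv (p + M) ^ k *
        (fps_X ^ (i\<^sup>2 + i * M) * qpoch_inv i * qpoch_inv (p - i) * qpoch_inv (M + i))"
      by (simp add: power_add[symmetric] algebra_simps)
  qed
  also have "\<dots> = lhs_partial (Suc k) M B"
    unfolding lhs_partial_def durfee_sum_eq by (intro sum.cong refl) (simp add: mult_ac)
  finally show ?thesis .
qed

lemma sum_rhs_term_from_eq_upto:
  "n \<le> B \<Longrightarrow>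
    fps_eq_upto n (sum (rhs_term_from M) (bounded_lists k B)) (qpoch B * lhs_partial k M B)"
proof (induction k arbitrary: M)
  case 0
  then show ?case by (simp add: lhs_partial_def sum_X_power_qpoch_inv rhs_term_from_def)
next
  case (Suc k)
  define F where "F i m = fps_X ^ (i * (M + i + 1)) * qpoch_inv i * qpoch_inv (M + i) *
    (fps_X ^ m * qpoch_inv m * qpoch_inv (m + (M + i)) ^ k)" for i m
  have "fps_eq_upto n (sum (rhs_term_from M) (bounded_lists (Suc k) B))
      (\<Sum>i\<le>B. fps_X ^ (i * (M + i + 1)) * qpoch_inv i * qpoch_inv (M + i) *
        (qpoch B * lhs_partial k (M + i) B))"
    unfolding sum_bounded_lists_Suc using Suc by (intro fps_eq_upto_sum fps_eq_upto_mult) auto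
  also have "(\<Sum>i\<le>B. fps_X ^ (i * (M + i + 1)) * qpoch_inv i * qpoch_inv (M + i) *
        (qpoch B * lhs_partial k (M + i) B)) = qpoch B * (\<Sum>(i, m)\<in>{..B} \<times> {..B}. F i m)"
    unfolding lhs_partial_def sum.cartesian_product[symmetric] sum_distrib_left F_def
    by (simp add: algebra_simps)
  finally have expand: "fps_eq_upto n (sum (rhs_term_from M) (bounded_lists (Suc k) B))
      (qpoch B * (\<Sum>(i, m)\<in>{..B} \<times> {..B}. F i m))" .
  have truncate: "fps_eq_upto n (\<Sum>(i, m)\<in>{..B} \<times> {..B}. F i m) (\<Sum>(i, m)\<in>{(i, m). i + m \<le> B}. F i m)"
  proof (rule fps_eq_upto_sum_subset)
    fix x
    assume x: "x \<in> {..B} \<times> {..B} - {(i, m). i + m \<le> B}"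
    obtain i m where x_eq: "x = (i, m)" by force
    have "F i m = fps_X ^ (i * (M + i + 1) + m) *
        (qpoch_inv i * qpoch_inv (M + i) * qpoch_inv m * qpoch_inv (m + (M + i)) ^ k)"
      unfolding F_def by (simp add: power_add algebra_simps)
    moreover have "n < i * (M + i + 1) + m"
      using x x_eq Suc.prems by auto
    ultimately show "fps_eq_upto n (case x of (i, m) \<Rightarrow> F i m) 0"
      by (simp add: x_eq fps_eq_upto_X_power_mult)
  qed auto
  show ?case
    using fps_eq_upto_trans[OF expand fps_eq_upto_mult[OF fps_eq_upto_refl truncate]]
    unfolding F_def lhs_partial_Suc .
qed

lemma sum_upper_triangle_Suc:
  "(\<Sum>s\<in>{1..<Suc n}. \<Sum>j\<in>{s..<Suc n}. g (s - 1) j) =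
    (\<Sum>s\<in>{1..<n}. \<Sum>j\<in>{s..<n}. g (s - 1) j) + (\<Sum>s<n. g s n)"
proof -
  have "(\<Sum>s\<in>{1..<Suc n}. \<Sum>j\<in>{s..<Suc n}. g (s - 1) j) =
      (\<Sum>s\<in>{1..<Suc n}. (\<Sum>j\<in>{s..<n}. g (s - 1) j) + g (s - 1) n)"
    by (intro sum.cong refl) (simp add: sum.atLeastLessThan_Suc)
  also have "\<dots> = (\<Sum>s\<in>{1..<Suc n}. \<Sum>j\<in>{s..<n}. g (s - 1) j) + (\<Sum>s<n. g s n)"
    using sum.shift_bounds_Suc_ivl[of "\<lambda>s. g (s - 1) n" 0 n]
    by (simp add: sum.distrib atLeast0LessThan)
  also have "(\<Sum>s\<in>{1..<Suc n}. \<Sum>j\<in>{s..<n}. g (s - 1) j) = (\<Sum>s\<in>{1..<n}. \<Sum>j\<in>{s..<n}. g (s - 1) j)"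
    by (cases n) (simp_all add: sum.atLeastLessThan_Suc)
  finally show ?thesis .
qed

lemma rhs_exp_snoc: "rhs_exp (xs @ [y]) = rhs_exp xs + y * (sum_list xs + y + 1)"
proof -
  let ?L = "length xs" and ?z = "xs @ [y]"
  have "rhs_exp ?z = (\<Sum>j<?L. ?z!j + (?z!j)\<^sup>2) + (y + y\<^sup>2) +
      ((\<Sum>s\<in>{1..<?L}. \<Sum>j\<in>{s..<?L}. ?z!(s - 1) * ?z!j) + (\<Sum>s<?L. ?z!s * y))"
    unfolding rhs_exp_def using sum_upper_triangle_Suc[where n = ?L and g = "\<lambda>s j. ?z!s * ?z!j"] by simp
  also have "\<dots> = rhs_exp xs + (y + y\<^sup>2) + (\<Sum>s<?L. xs!s * y)"
    unfolding rhs_exp_def by (auto simp: nth_append intro!: sum.cong)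
  also have "(\<Sum>s<?L. xs!s * y) = sum_list xs * y"
    by (simp add: sum_list_sum_nth atLeast0LessThan sum_distrib_right)
  finally show ?thesis
    by (simp add: power2_eq_square algebra_simps)
qed

lemma rhs_den_snoc: "rhs_den (xs @ [y]) = rhs_den xs * (qpoch y * qpoch (sum_list xs + y))"
proof -
  let ?L = "length xs" and ?z = "xs @ [y]"
  have prefix: "(\<Sum>s\<le>j. ?z!s) = (\<Sum>s\<le>j. xs!s)" if "j < ?L" for j
    using that by (intro sum.cong refl) (simp add: nth_append)
  have total: "(\<Sum>s\<le>?L. ?z!s) = sum_list xs + y"
    by (simp add: lessThan_Suc_atMost[symmetric] nth_append sum_list_sum_nth atLeast0LessThan)
  have "rhs_den ?z = (\<Prod>j<?L. qpoch (?z!j) * qpoch (\<Sum>s\<le>j. ?z!s)) *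
      (qpoch (?z!?L) * qpoch (\<Sum>s\<le>?L. ?z!s))"
    unfolding rhs_den_def by (simp only: length_append_singleton prod.lessThan_Suc)
  also have "(\<Prod>j<?L. qpoch (?z!j) * qpoch (\<Sum>s\<le>j. ?z!s)) = rhs_den xs"
    unfolding rhs_den_def by (intro prod.cong refl) (simp add: prefix nth_append)
  finally show ?thesis
    unfolding total by simp
qed

lemma rhs_exp_from_snoc:
  "rhs_exp_from M (xs @ [y]) = rhs_exp_from M xs + y * (M + sum_list xs + y + 1)"
  by (induction xs arbitrary: M) (simp_all add: algebra_simps)

lemma rhs_inv_den_from_snoc:
  "rhs_inv_den_from M (xs @ [y]) = rhs_inv_den_from M xs * (qpoch_inv y * qpoch_inv (M + sum_list xs + y))"
  by (induction xs arbitrary: M) (simp_all add: algebra_simps)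

lemma rhs_term_eq: "rhs_term = rhs_term_from 0"
proof
  fix xs
  have "rhs_exp xs = rhs_exp_from 0 xs"
    by (induction xs rule: rev_induct) (simp_all add: rhs_exp_snoc rhs_exp_from_snoc, simp add: rhs_exp_def)
  moreover have "fps_nth (rhs_den xs) 0 \<noteq> 0 \<and> inverse (rhs_den xs) = rhs_inv_den_from 0 xs"
    by (induction xs rule: rev_induct)
      (simp_all add: rhs_den_snoc rhs_inv_den_from_snoc fps_inverse_mult qpoch_inv_def, simp add: rhs_den_def)
  ultimately show "rhs_term xs = rhs_term_from 0 xs"
    unfolding rhs_term_def rhs_term_from_def by (simp add: fps_divide_unit)
qed

lemma lhs_series_sums:
  obtains S where "(\<lambda>i. fps_X ^ i / qpoch i ^ (k + 1)) sums S"
    and "\<And>n. fps_eq_upto n S (lhs_partial k 0 n)"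
proof -
  define f where "f i = fps_X ^ i * (qpoch_inv i * qpoch_inv i ^ k)" for i
  have f_eq: "(\<lambda>i. fps_X ^ i / qpoch i ^ (k + 1)) = f"
    by (rule ext) (simp add: f_def qpoch_inv_def fps_divide_unit fps_power_zeroth fps_inverse_power
        fps_inverse_mult)
  obtain S where S: "(f has_sum S) UNIV" and S_eq: "\<And>n. fps_eq_upto n S (\<Sum>i\<le>n. f i)"
    by (rule has_sum_of_eq_upto[of atMost UNIV f]) (auto simp: f_def intro: fps_eq_upto_X_power_mult)
  show ?thesis
  proof (rule that)
    show "(\<lambda>i. fps_X ^ i / qpoch i ^ (k + 1)) sums S"
      unfolding f_eq using S by (rule has_sum_imp_sums)
    show "fps_eq_upto n S (lhs_partial k 0 n)" for n
      using S_eq[of n] by (simp add: lhs_partial_def f_def mult.assoc)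
  qed
qed

lemma rhs_series_has_sum:
  obtains R where "(rhs_term has_sum R) {xs. length xs = k}"
    and "\<And>n. fps_eq_upto n R (sum rhs_term (bounded_lists k n))"
proof (rule has_sum_of_eq_upto)
  fix n xs
  assume xs: "xs \<in> {xs. length xs = k} - bounded_lists k n"
  then obtain x where "x \<in> set xs" "n < x"
    by (force simp: bounded_lists_def subset_iff not_le)
  then have "n < rhs_exp_from 0 xs"
    using member_le_rhs_exp_from by (meson less_le_trans)
  then show "fps_eq_upto n (rhs_term xs) 0"
    by (simp add: rhs_term_eq rhs_term_from_def fps_eq_upto_X_power_mult)
qed (auto intro: that simp: bounded_lists_def finite_lists_length_eq)

theorem mainTheorem4:
  fixes k :: nat
  assumes "k \<ge> 1"
  shows "convergent qpoch
    \<and> summable (\<lambda>i. fps_X ^ i / qpoch i ^ (k + 1))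
    \<and> rhs_term summable_on {xs. length xs = k}
    \<and> qpoch_inf * (\<Sum>i. fps_X ^ i / qpoch i ^ (k + 1))
        = (\<Sum>\<^sub>\<infinity> xs\<in>{xs. length xs = k}. rhs_term xs)"
proof -
  obtain S where S: "(\<lambda>i. fps_X ^ i / qpoch i ^ (k + 1)) sums S"
    and S_eq: "\<And>n. fps_eq_upto n S (lhs_partial k 0 n)"
    using lhs_series_sums by blast
  obtain R where R: "(rhs_term has_sum R) {xs. length xs = k}"
    and R_eq: "\<And>n. fps_eq_upto n R (sum (rhs_term_from 0) (bounded_lists k n))"
    using rhs_series_has_sum unfolding rhs_term_eq by blast
  have "qpoch_inf * S = R"
  proof (rule fps_ext_eq_upto)
    fix n
    have "fps_eq_upto n (qpoch_inf * S) (qpoch n * lhs_partial k 0 n)"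
      using qpoch_inf_eq_upto S_eq by (rule fps_eq_upto_mult)
    then show "fps_eq_upto n (qpoch_inf * S) R"
      using sum_rhs_term_from_eq_upto[of n n] R_eq
      by (meson fps_eq_upto_sym fps_eq_upto_trans order_refl)
  qed
  then show ?thesis
    using convergent_qpoch sums_summable[OF S] sums_unique[OF S] infsumI[OF R] R
    by (auto simp: summable_on_def)
qed

end
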